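(* Let $p$ be a strongly productive ultrafilter on a semigroup $S$. If $\mathrm{FP}(\vec{x})\in p$ for some sequence $\vec{x}$ in $S$ satisfying the ordered uniqueness of finite products, then $p$ is sparse (indeed multiplicatively isomorphic to an ordered union ultrafilter).
   Context: For a sequence $\vec{x}=(x_n)_{n\in\omega}$ in $S$, $\mathrm{FP}(\vec{x})$ is the set of products $\prod_{i\in a}x_i$ (increasing order of indices), $a$ a finite nonempty subset of $\omega$; $p$ is strongly productive if every $A\in p$ contains some $\mathrm{FP}(\vec{x})\in p$. $\mathbb{F}$ is the partial semigroup of finite nonempty subsets of $\omega$ with $ab=a\cup b$ defined iff $\max a<\min b$. $\vec{x}$ satisfies the ordered uniqueness of finite products if $f:\mathbb{F}\to\mathrm{FP}(\vec{x})$, $f(a)=\prod_{i\in a}x_i$, is injective and whenever $a,b\in\mathbb{F}$ satisfy $f(a)f(b)\in\mathrm{FP}(\vec{x})$, one has $\max a<\min b$. An ordered union ultrafilter is a strongly productive ultrafilter on the partial semigroup $\mathbb{F}$; $p$ is multiplicatively isomorphic to one if for some $\vec{x}$ the map $f$ above is injective and $\{f^{-1}[A]:A\in p\}$ is an ordered union ultrafilter. $p$ is sparse if for every $A\in p$ there are a sequence $\vec{x}$ in $S$ and a subsequence $\vec{y}=(x_{k_n})_n$ ($k_0<k_1<\cdots$) with $\mathrm{FP}(\vec{y})\in p$, $\mathrm{FP}(\vec{x})\subseteq A$, and $\{k_n:n\in\omega\}$ coinfinite in $\omega$. *)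

theory Defs
  imports Main
begin

definition ultrafilter_on :: "'b set \<Rightarrow> 'b set set \<Rightarrow> bool" where
  "ultrafilter_on X p \<longleftrightarrow>
     p \<subseteq> Pow X \<and> X \<in> p \<and> {} \<notin> p \<and>
     (\<forall>A B. A \<in> p \<and> A \<subseteq> B \<and> B \<subseteq> X \<longrightarrow> B \<in> p) \<and>
     (\<forall>A B. A \<in> p \<and> B \<in> p \<longrightarrow> A \<inter> B \<in> p) \<and>
     (\<forall>A. A \<subseteq> X \<longrightarrow> A \<in> p \<or> X - A \<in> p)"

definition FinSets :: "nat set set" where
  "FinSets = {a. finite a \<and> a \<noteq> {}}"

definition oprod :: "(nat \<Rightarrow> 'a::semigroup_mult) \<Rightarrow> nat set \<Rightarrow> 'a" where
  "oprod x a = (let l = sorted_list_of_set a in foldl (*) (x (hd l)) (map x (tl l)))"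

definition FP :: "(nat \<Rightarrow> 'a::semigroup_mult) \<Rightarrow> 'a set" where
  "FP x = oprod x ` FinSets"

definition strongly_productive :: "'a::semigroup_mult set set \<Rightarrow> bool" where
  "strongly_productive p \<longleftrightarrow> ultrafilter_on UNIV p \<and>
     (\<forall>A\<in>p. \<exists>x. FP x \<subseteq> A \<and> FP x \<in> p)"

definition ordered_uniqueness :: "(nat \<Rightarrow> 'a::semigroup_mult) \<Rightarrow> bool" where
  "ordered_uniqueness x \<longleftrightarrow> inj_on (oprod x) FinSets \<and>
     (\<forall>a\<in>FinSets. \<forall>b\<in>FinSets. oprod x a * oprod x b \<in> FP x \<longrightarrow> Max a < Min b)"

text \<open>Sequences in F all of whose finite ordered products are defined (block sequences),
  and their finite products (= finite unions) in the partial semigroup F.\<close>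
definition block_seq :: "(nat \<Rightarrow> nat set) \<Rightarrow> bool" where
  "block_seq y \<longleftrightarrow> (\<forall>n. y n \<in> FinSets) \<and> (\<forall>n. Max (y n) < Min (y (Suc n)))"

definition FU :: "(nat \<Rightarrow> nat set) \<Rightarrow> nat set set" where
  "FU y = (\<lambda>a. \<Union>i\<in>a. y i) ` FinSets"

definition ordered_union_uf :: "nat set set set \<Rightarrow> bool" where
  "ordered_union_uf q \<longleftrightarrow> ultrafilter_on FinSets q \<and>
     (\<forall>A\<in>q. \<exists>y. block_seq y \<and> FU y \<subseteq> A \<and> FU y \<in> q)"

definition mult_iso_OU :: "'a::semigroup_mult set set \<Rightarrow> bool" where
  "mult_iso_OU p \<longleftrightarrow> (\<exists>x. inj_on (oprod x) FinSets \<and>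
     ordered_union_uf ((\<lambda>A. FinSets \<inter> oprod x -` A) ` p))"

definition sparse :: "'a::semigroup_mult set set \<Rightarrow> bool" where
  "sparse p \<longleftrightarrow> (\<forall>A\<in>p. \<exists>x k. strict_mono k \<and> FP (x \<circ> k) \<in> p \<and> FP x \<subseteq> A \<and>
     infinite (UNIV - range k))"

end

theory Submission imports Defs begin

text \<open>Since \<open>oprod x\<close> is injective on FinSets with image \<open>FP x \<in> p\<close>, pulling \<open>p\<close> back along it
  gives an ultrafilter \<open>q\<close> on FinSets. Each member of \<open>p\<close> contains some \<open>FP u \<in> p\<close> inside
  \<open>FP x\<close>, and ordered uniqueness forces \<open>u\<close> to be the condensation \<open>\<lambda>n. oprod x (z n)\<close> of \<open>x\<close>
  along a block sequence \<open>z\<close>; hence \<open>q\<close> is an ordered union ultrafilter.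

  For sparseness, colour finite sets by their number of maximal intervals modulo 3. Concatenating
  two blocks adds these numbers, minus one if the blocks touch, so a monochromatic \<open>FU b\<close> has
  gaps between consecutive blocks. Filling every gap with a singleton block gives a longer
  block sequence whose even-indexed blocks are those of \<open>b\<close>.\<close>

section \<open>Ordered products\<close>

lemma sorted_list_of_set_Un_less:
  fixes a c :: "nat set"
  assumes "finite a" "finite c" "\<forall>u\<in>a. \<forall>v\<in>c. u < v"
  shows "sorted_list_of_set (a \<union> c) = sorted_list_of_set a @ sorted_list_of_set c"
  using assms by (intro strict_sorted_equal) (auto simp: sorted_wrt_append)

lemma foldl_mult_assoc:
  "foldl (*) (a * b) l = (a::'a::semigroup_mult) * foldl (*) b l"
  by (induction l arbitrary: b) (auto simp: mult.assoc)

lemma oprod_singleton [simp]: "oprod x {n} = x n"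
  by (simp add: oprod_def)

lemma oprod_Un:
  assumes "a \<in> FinSets" "c \<in> FinSets" "\<forall>u\<in>a. \<forall>v\<in>c. u < v"
  shows "oprod x (a \<union> c) = oprod x a * oprod x c"
proof -
  obtain l where l: "sorted_list_of_set a = l" "l \<noteq> []"
    using assms by (auto simp: FinSets_def)
  obtain h t where ht: "sorted_list_of_set c = h # t"
    using assms by (cases "sorted_list_of_set c") (auto simp: FinSets_def)
  have "oprod x (a \<union> c) = foldl (*) (x (hd l)) (map x (tl l) @ map x (h # t))"
    using assms l ht by (simp add: oprod_def sorted_list_of_set_Un_less FinSets_def)
  also have "\<dots> = foldl (*) (oprod x a * x h) (map x t)"
    using l by (simp add: oprod_def)
  also have "\<dots> = oprod x a * oprod x c"
    using ht by (simp add: oprod_def foldl_mult_assoc)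
  finally show ?thesis .
qed

lemma singleton_in_FinSets [simp]: "{n} \<in> FinSets"
  by (simp add: FinSets_def)

lemma in_FP: "x n \<in> FP x"
  unfolding FP_def by (metis image_eqI oprod_singleton singleton_in_FinSets)

lemma oprod_Suc_pair: "oprod x {n, Suc n} = x n * x (Suc n)"
  using oprod_Un[of "{n}" "{Suc n}" x] by (simp add: insert_commute)

section \<open>Block sequences and condensations\<close>

lemma block_seq_Max_less_Min:
  assumes "block_seq z" "i < j"
  shows "Max (z i) < Min (z j)"
  using assms(2)
proof (induction j)
  case (Suc j)
  have "Min (z j) \<le> Max (z j)" "Max (z j) < Min (z (Suc j))"
    using assms(1) by (auto simp: block_seq_def FinSets_def)
  then show ?case using Suc by (cases "i = j") auto
qed simp

lemma block_seq_less:
  assumes "block_seq z" "i < j" "u \<in> z i" "v \<in> z j"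
  shows "u < v"
proof -
  have "u \<le> Max (z i)" "Min (z j) \<le> v"
    using assms by (auto simp: block_seq_def FinSets_def)
  then show ?thesis using block_seq_Max_less_Min[OF assms(1,2)] by simp
qed

lemma block_seq_Min_le_Max:
  assumes "block_seq z" "i \<le> j"
  shows "Min (z i) \<le> Max (z j)"
proof -
  have "Min (z i) \<in> z i" "Max (z j) \<in> z j" "Min (z i) \<le> Max (z i)"
    using assms(1) by (auto simp: block_seq_def FinSets_def)
  then show ?thesis
    using assms block_seq_less[OF assms(1), of i j] by (cases "i = j") force+
qed

lemma block_union_in_FinSets:
  "block_seq z \<Longrightarrow> s \<in> FinSets \<Longrightarrow> (\<Union>i\<in>s. z i) \<in> FinSets"
  by (auto simp: FinSets_def block_seq_def)

lemma FU_subset_FinSets: "block_seq z \<Longrightarrow> FU z \<subseteq> FinSets"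
  unfolding FU_def using block_union_in_FinSets by blast

lemma oprod_block_union:
  assumes z: "block_seq z" and s: "s \<in> FinSets"
  shows "oprod x (\<Union>i\<in>s. z i) = oprod (\<lambda>n. oprod x (z n)) s"
proof -
  have "finite s" using s by (simp add: FinSets_def)
  then have "s \<noteq> {} \<longrightarrow> oprod x (\<Union>i\<in>s. z i) = oprod (\<lambda>n. oprod x (z n)) s"
  proof (induction s rule: finite_linorder_max_induct)
    case (insert m s)
    show ?case
    proof (cases "s = {}")
      case False
      then have s: "s \<in> FinSets" using insert by (simp add: FinSets_def)
      have zm: "z m \<in> FinSets" using z by (simp add: block_seq_def)
      have "\<forall>u\<in>\<Union>i\<in>s. z i. \<forall>v\<in>z m. u < v"
        using insert block_seq_less[OF z] by blast
      then have "oprod x (\<Union>i\<in>insert m s. z i) = oprod x (\<Union>i\<in>s. z i) * oprod x (z m)"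
        using oprod_Un[OF block_union_in_FinSets[OF z s] zm] by (simp add: Un_commute)
      also have "\<dots> = oprod (\<lambda>n. oprod x (z n)) (s \<union> {m})"
        using insert False oprod_Un[OF s singleton_in_FinSets[of m], where x = "\<lambda>n. oprod x (z n)"]
        by simp
      finally show ?thesis by (simp add: insert_commute)
    qed simp
  qed simp
  then show ?thesis using s by (simp add: FinSets_def)
qed

lemma FP_block_condense:
  assumes "block_seq z"
  shows "FP (\<lambda>n. oprod x (z n)) = oprod x ` FU z"
proof -
  have "FP (\<lambda>n. oprod x (z n)) = (\<lambda>s. oprod x (\<Union>i\<in>s. z i)) ` FinSets"
    unfolding FP_def using oprod_block_union[OF assms] by (auto simp: image_iff)
  then show ?thesis by (simp add: FU_def image_image)
qed

lemma FP_block_condense_subset: "block_seq z \<Longrightarrow> FP (\<lambda>n. oprod x (z n)) \<subseteq> FP x"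
  using FP_block_condense FU_subset_FinSets unfolding FP_def by blast

lemma block_union_inj:
  assumes "block_seq z"
  shows "inj_on (\<lambda>s. \<Union>i\<in>s. z i) FinSets"
proof (rule inj_onI)
  fix s t assume eq: "(\<Union>i\<in>s. z i) = (\<Union>i\<in>t. z i)"
  have mem: "i \<in> s \<longleftrightarrow> z i \<inter> (\<Union>j\<in>s. z j) \<noteq> {}" for i s
  proof
    assume "i \<in> s"
    moreover have "z i \<noteq> {}" using assms by (simp add: block_seq_def FinSets_def)
    ultimately show "z i \<inter> (\<Union>j\<in>s. z j) \<noteq> {}" by blast
  next
    assume "z i \<inter> (\<Union>j\<in>s. z j) \<noteq> {}"
    then obtain j u where "j \<in> s" "u \<in> z i" "u \<in> z j" by blast
    moreover have "i = j"
    proof (rule ccontr)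
      assume "i \<noteq> j"
      then consider "i < j" | "j < i" by linarith
      then show False using block_seq_less[OF assms] \<open>u \<in> z i\<close> \<open>u \<in> z j\<close> by cases blast+
    qed
    ultimately show "i \<in> s" by simp
  qed
  show "s = t"
  proof (rule set_eqI)
    show "i \<in> s \<longleftrightarrow> i \<in> t" for i using mem[of i s] mem[of i t] eq by simp
  qed
qed

lemma block_union_Max_less_Min:
  assumes z: "block_seq z" and st: "s \<in> FinSets" "t \<in> FinSets"
    and less: "Max (\<Union>i\<in>s. z i) < Min (\<Union>i\<in>t. z i)"
  shows "Max s < Min t"
proof (rule ccontr)
  assume "\<not> Max s < Min t"
  then have "Min (z (Min t)) \<le> Max (z (Max s))"
    using block_seq_Min_le_Max[OF z] by simp
  moreover have "Max (z (Max s)) \<le> Max (\<Union>i\<in>s. z i)"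
  proof (rule Max_ge)
    show "finite (\<Union>i\<in>s. z i)" using block_union_in_FinSets[OF z st(1)] by (simp add: FinSets_def)
    have "Max s \<in> s" "Max (z (Max s)) \<in> z (Max s)"
      using st z by (simp_all add: block_seq_def FinSets_def)
    then show "Max (z (Max s)) \<in> (\<Union>i\<in>s. z i)" by blast
  qed
  moreover have "Min (\<Union>i\<in>t. z i) \<le> Min (z (Min t))"
  proof (rule Min_le)
    show "finite (\<Union>i\<in>t. z i)" using block_union_in_FinSets[OF z st(2)] by (simp add: FinSets_def)
    have "Min t \<in> t" "Min (z (Min t)) \<in> z (Min t)"
      using st z by (simp_all add: block_seq_def FinSets_def)
    then show "Min (z (Min t)) \<in> (\<Union>i\<in>t. z i)" by blast
  qed
  ultimately show False using less by simp
qed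

lemma ordered_uniqueness_block_condense:
  assumes ou: "ordered_uniqueness x" and z: "block_seq z"
  shows "ordered_uniqueness (\<lambda>n. oprod x (z n))"
  unfolding ordered_uniqueness_def
proof
  have "inj_on (oprod x \<circ> (\<lambda>s. \<Union>i\<in>s. z i)) FinSets"
    using ou block_union_inj[OF z] block_union_in_FinSets[OF z]
    by (intro comp_inj_on) (auto simp: ordered_uniqueness_def intro: inj_on_subset)
  then show "inj_on (oprod (\<lambda>n. oprod x (z n))) FinSets"
    by (rule inj_on_cong[THEN iffD1, rotated]) (simp add: oprod_block_union[OF z])
next
  show "\<forall>s\<in>FinSets. \<forall>t\<in>FinSets. oprod (\<lambda>n. oprod x (z n)) s * oprod (\<lambda>n. oprod x (z n)) t
      \<in> FP (\<lambda>n. oprod x (z n)) \<longrightarrow> Max s < Min t"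
  proof (intro ballI impI)
    fix s t assume st: "s \<in> FinSets" "t \<in> FinSets"
      and "oprod (\<lambda>n. oprod x (z n)) s * oprod (\<lambda>n. oprod x (z n)) t \<in> FP (\<lambda>n. oprod x (z n))"
    then have "oprod x (\<Union>i\<in>s. z i) * oprod x (\<Union>i\<in>t. z i) \<in> FP x"
      using FP_block_condense_subset[OF z] oprod_block_union[OF z st(1)] oprod_block_union[OF z st(2)]
      by (metis subsetD)
    then have "Max (\<Union>i\<in>s. z i) < Min (\<Union>i\<in>t. z i)"
      using ou st block_union_in_FinSets[OF z] unfolding ordered_uniqueness_def by blast
    then show "Max s < Min t" using block_union_Max_less_Min[OF z st] by blast
  qed
qed

section \<open>The pulled-back ordered union ultrafilter\<close>

lemma ultrafilter_on_Int: "ultrafilter_on X p \<Longrightarrow> A \<in> p \<Longrightarrow> B \<in> p \<Longrightarrow> A \<inter> B \<in> p"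
  by (simp add: ultrafilter_on_def)

lemma ultrafilter_on_mono: "ultrafilter_on X p \<Longrightarrow> A \<in> p \<Longrightarrow> A \<subseteq> B \<Longrightarrow> B \<subseteq> X \<Longrightarrow> B \<in> p"
  unfolding ultrafilter_on_def by blast

lemma ultrafilter_on_Un:
  assumes p: "ultrafilter_on X p" and "A \<union> B \<in> p" "A \<subseteq> X" "B \<subseteq> X"
  shows "A \<in> p \<or> B \<in> p"
proof (rule disjCI)
  assume "B \<notin> p"
  then have "X - B \<in> p" using p assms(4) unfolding ultrafilter_on_def by blast
  then have "(A \<union> B) \<inter> (X - B) \<in> p" using ultrafilter_on_Int[OF p assms(2)] by blast
  then show "A \<in> p" using ultrafilter_on_mono[OF p] assms(3) by blast
qed

lemma strongly_productive_block_seq: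
  assumes sp: "strongly_productive p" and ou: "ordered_uniqueness x"
    and "FP x \<in> p" "A \<in> p"
  obtains z where "block_seq z" "FP (\<lambda>n. oprod x (z n)) \<subseteq> A" "FP (\<lambda>n. oprod x (z n)) \<in> p"
proof -
  have "A \<inter> FP x \<in> p"
    using sp assms(3,4) ultrafilter_on_Int by (fastforce simp: strongly_productive_def)
  then obtain u where u: "FP u \<subseteq> A \<inter> FP x" "FP u \<in> p"
    using sp unfolding strongly_productive_def by blast
  have "\<forall>n. \<exists>a\<in>FinSets. u n = oprod x a"
    using u(1) in_FP[of u] unfolding FP_def by blast
  then obtain z where z: "\<And>n. z n \<in> FinSets" "\<And>n. u n = oprod x (z n)" by metis
  have "Max (z n) < Min (z (Suc n))" for n
  proof -
    have "oprod u {n, Suc n} \<in> FP u" unfolding FP_def by (simp add: FinSets_def)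
    then have "oprod x (z n) * oprod x (z (Suc n)) \<in> FP x"
      using u(1) by (auto simp: oprod_Suc_pair z(2)[symmetric])
    then show ?thesis using ou z(1) unfolding ordered_uniqueness_def by blast
  qed
  then have "block_seq z" using z(1) by (simp add: block_seq_def)
  moreover have "(\<lambda>n. oprod x (z n)) = u" using z(2) by auto
  ultimately show ?thesis using that u by auto
qed

lemma preimages_oprod_eq:
  assumes uf: "ultrafilter_on UNIV p" and inj: "inj_on (oprod x) FinSets" and Fx: "FP x \<in> p"
  shows "(\<lambda>A. FinSets \<inter> oprod x -` A) ` p = {B. B \<subseteq> FinSets \<and> oprod x ` B \<in> p}"
proof (intro set_eqI iffI)
  fix B assume "B \<in> (\<lambda>A. FinSets \<inter> oprod x -` A) ` p"
  then obtain A where "A \<in> p" "B = FinSets \<inter> oprod x -` A" by blast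
  moreover have "oprod x ` (FinSets \<inter> oprod x -` A) = A \<inter> FP x" by (auto simp: FP_def)
  ultimately show "B \<in> {B. B \<subseteq> FinSets \<and> oprod x ` B \<in> p}"
    using ultrafilter_on_Int[OF uf _ Fx] by auto
next
  fix B assume "B \<in> {B. B \<subseteq> FinSets \<and> oprod x ` B \<in> p}"
  moreover have "B \<subseteq> FinSets \<Longrightarrow> FinSets \<inter> oprod x -` (oprod x ` B) = B"
    using inj by (auto dest: inj_onD)
  ultimately show "B \<in> (\<lambda>A. FinSets \<inter> oprod x -` A) ` p" by (metis (mono_tags) image_eqI mem_Collect_eq)
qed

lemma ordered_union_uf_image_oprod:
  assumes sp: "strongly_productive p" and ou: "ordered_uniqueness x" and Fx: "FP x \<in> p"
  shows "ordered_union_uf {B. B \<subseteq> FinSets \<and> oprod x ` B \<in> p}" (is "ordered_union_uf ?q")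
proof -
  have uf: "ultrafilter_on UNIV p" using sp by (simp add: strongly_productive_def)
  have inj: "inj_on (oprod x) FinSets" using ou by (simp add: ordered_uniqueness_def)
  have "ultrafilter_on FinSets ?q"
    unfolding ultrafilter_on_def
  proof (intro conjI allI impI)
    show "?q \<subseteq> Pow FinSets" "FinSets \<in> ?q" "{} \<notin> ?q"
      using Fx uf by (auto simp: FP_def ultrafilter_on_def)
  next
    fix A B assume "A \<in> ?q \<and> A \<subseteq> B \<and> B \<subseteq> FinSets"
    then show "B \<in> ?q" using ultrafilter_on_mono[OF uf] image_mono by (metis mem_Collect_eq subset_UNIV)
  next
    fix A B assume "A \<in> ?q \<and> B \<in> ?q"
    then show "A \<inter> B \<in> ?q" using ultrafilter_on_Int[OF uf] by (auto simp: inj_on_image_Int[OF inj])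
  next
    fix B assume B: "B \<subseteq> FinSets"
    have "oprod x ` B \<in> p \<or> UNIV - oprod x ` B \<in> p" using uf by (simp add: ultrafilter_on_def)
    moreover have "(UNIV - oprod x ` B) \<inter> FP x = oprod x ` (FinSets - B)"
      using B by (auto simp: FP_def inj_on_image_set_diff[OF inj])
    ultimately show "B \<in> ?q \<or> FinSets - B \<in> ?q"
      using B ultrafilter_on_Int[OF uf _ Fx] by (metis Diff_subset mem_Collect_eq)
  qed
  moreover have "\<exists>z. block_seq z \<and> FU z \<subseteq> B \<and> FU z \<in> ?q" if B: "B \<in> ?q" for B
  proof -
    obtain z where z: "block_seq z" "FP (\<lambda>n. oprod x (z n)) \<subseteq> oprod x ` B"
      "FP (\<lambda>n. oprod x (z n)) \<in> p"
      using strongly_productive_block_seq[OF sp ou Fx] B by blast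
    have "FU z \<subseteq> B"
    proof
      fix a assume a: "a \<in> FU z"
      then have "oprod x a \<in> oprod x ` B" using z(2) unfolding FP_block_condense[OF z(1)] by blast
      then show "a \<in> B" using inj_on_image_mem_iff[OF inj] a FU_subset_FinSets[OF z(1)] B by blast
    qed
    then show ?thesis using z FU_subset_FinSets[OF z(1)] by (auto simp: FP_block_condense)
  qed
  ultimately show ?thesis unfolding ordered_union_uf_def by blast
qed

lemma mult_iso_OU_if_ordered_uniqueness:
  assumes sp: "strongly_productive p" and ou: "ordered_uniqueness x" and Fx: "FP x \<in> p"
  shows "mult_iso_OU p"
proof -
  have "inj_on (oprod x) FinSets" using ou by (simp add: ordered_uniqueness_def)
  moreover have "ultrafilter_on UNIV p" using sp by (simp add: strongly_productive_def)
  ultimately show ?thesis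
    using ordered_union_uf_image_oprod[OF assms] preimages_oprod_eq[OF _ _ Fx]
    unfolding mult_iso_OU_def by metis
qed

section \<open>Sparseness\<close>

definition num_intervals :: "nat set \<Rightarrow> nat" where
  "num_intervals a = card {i\<in>a. Suc i \<notin> a}"

lemma num_intervals_Un:
  assumes "a \<in> FinSets" "c \<in> FinSets" "\<forall>u\<in>a. \<forall>v\<in>c. u < v"
  shows "num_intervals (a \<union> c) + (if Suc (Max a) = Min c then 1 else 0)
    = num_intervals a + num_intervals c"
proof -
  have fa: "finite a" "a \<noteq> {}" and fc: "finite c" "c \<noteq> {}" using assms by (auto simp: FinSets_def)
  have Ma: "Max a \<in> a" "\<And>i. i \<in> a \<Longrightarrow> i \<le> Max a" using fa by auto
  have Mc: "Min c \<in> c" "\<And>i. i \<in> c \<Longrightarrow> Min c \<le> i" using fc by auto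
  have lt: "Max a < Min c" using assms(3) Ma Mc by blast
  have touch: "Suc i \<in> c \<longleftrightarrow> i = Max a \<and> Suc (Max a) = Min c" if i: "i \<in> a" for i
  proof
    assume "Suc i \<in> c"
    then have "Max a < Suc i" "Min c \<le> Suc i" using assms(3) Ma Mc by blast+
    then show "i = Max a \<and> Suc (Max a) = Min c" using Ma i lt by force
  qed (use Mc in simp)
  have "i \<in> c \<Longrightarrow> Suc i \<notin> a" for i using assms(3) by (meson less_SucI less_asym)
  with touch have eq: "{i\<in>a \<union> c. Suc i \<notin> a \<union> c}
      = ({i\<in>a. Suc i \<notin> a} - (if Suc (Max a) = Min c then {Max a} else {})) \<union> {i\<in>c. Suc i \<notin> c}"
    by auto
  have Ra: "Max a \<in> {i\<in>a. Suc i \<notin> a}" using Ma(1) Ma(2)[of "Suc (Max a)"] by auto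
  have "card {i\<in>a. Suc i \<notin> a} > 0"
    using fa(1) Ra by (intro card_gt_0_iff[THEN iffD2]) auto
  then show ?thesis
    unfolding num_intervals_def eq using fa fc assms(3) card_Diff_singleton[OF Ra]
    by (subst card_Un_disjoint) auto
qed

lemma block_in_FU: "b n \<in> FU b"
  unfolding FU_def by (rule image_eqI[of _ _ "{n}"]) auto

lemma block_pair_in_FU: "b n \<union> b m \<in> FU b"
  unfolding FU_def by (rule image_eqI[of _ _ "{n, m}"]) (auto simp: FinSets_def)

lemma block_seq_gap_if_num_intervals_mod_3:
  assumes b: "block_seq b" and col: "\<forall>a\<in>FU b. num_intervals a mod 3 = j"
  shows "Suc (Max (b n)) < Min (b (Suc n))"
proof -
  have bF: "b n \<in> FinSets" for n using b by (simp add: block_seq_def)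
  have Un: "num_intervals (b n \<union> b m) + (if Suc (Max (b n)) = Min (b m) then 1 else 0)
      = num_intervals (b n) + num_intervals (b m)" if "n < m" for n m
    using num_intervals_Un[OF bF bF] block_seq_less[OF b that] by blast
  have c1: "num_intervals (b n) mod 3 = j" for n using col block_in_FU by blast
  have c2: "num_intervals (b n \<union> b m) mod 3 = j" for n m using col block_pair_in_FU by blast
  have "Max (b 0) < Min (b 1)" "Max (b 1) < Min (b 2)" "Min (b 1) \<le> Max (b 1)"
    using block_seq_Max_less_Min[OF b, of 0 1] block_seq_Max_less_Min[OF b, of 1 2] bF[of 1]
    by (simp_all add: FinSets_def)
  then have "Suc (Max (b 0)) < Min (b 2)" by simp
  then have "num_intervals (b 0 \<union> b 2) = num_intervals (b 0) + num_intervals (b 2)"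
    using Un[of 0 2] by simp
  then have "j = (num_intervals (b 0) + num_intervals (b 2)) mod 3" using c2[of 0 2] by simp
  also have "\<dots> = (j + j) mod 3"
    using mod_add_eq[of "num_intervals (b 0)" 3 "num_intervals (b 2)"] c1[of 0] c1[of 2] by simp
  finally have "j = (j + j) mod 3" .
  moreover have "j < 3" using c1[of 0] by auto
  ultimately have j: "j = 0" by presburger
  have "Suc (Max (b n)) \<noteq> Min (b (Suc n))"
  proof
    assume "Suc (Max (b n)) = Min (b (Suc n))"
    then have "num_intervals (b n \<union> b (Suc n)) + 1 = num_intervals (b n) + num_intervals (b (Suc n))"
      using Un[of n "Suc n"] by simp
    have "(j + 1) mod 3 = (num_intervals (b n \<union> b (Suc n)) + 1) mod 3"
      using mod_add_left_eq[of "num_intervals (b n \<union> b (Suc n))" 3 1] c2[of n "Suc n"] by simp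
    also have "\<dots> = (num_intervals (b n) + num_intervals (b (Suc n))) mod 3"
      using \<open>num_intervals (b n \<union> b (Suc n)) + 1 = _\<close> by simp
    also have "\<dots> = (j + j) mod 3"
      using mod_add_eq[of "num_intervals (b n)" 3 "num_intervals (b (Suc n))"] c1[of n] c1[of "Suc n"]
      by simp
    finally have "(j + 1) mod 3 = (j + j) mod 3" .
    then show False using j by simp
  qed
  then show ?thesis using block_seq_Max_less_Min[OF b, of n "Suc n"] by simp
qed

lemma ordered_union_uf_gapped_block_seq:
  assumes q: "ordered_union_uf q"
  obtains b where "block_seq b" "\<And>n. Suc (Max (b n)) < Min (b (Suc n))" "FU b \<in> q"
proof -
  have uf: "ultrafilter_on FinSets q" using q by (simp add: ordered_union_uf_def)
  define C where "C j = {a\<in>FinSets. num_intervals a mod 3 = j}" for j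
  have C: "C j \<subseteq> FinSets" for j unfolding C_def by blast
  have "C 0 \<union> C 1 \<union> C 2 = FinSets" unfolding C_def by auto
  then have "C 0 \<union> C 1 \<union> C 2 \<in> q" using uf by (simp add: ultrafilter_on_def)
  then have "C 0 \<union> C 1 \<in> q \<or> C 2 \<in> q" using ultrafilter_on_Un[OF uf] C by blast
  then have "C 0 \<in> q \<or> C 1 \<in> q \<or> C 2 \<in> q" using ultrafilter_on_Un[OF uf] C by blast
  then obtain j where "C j \<in> q" by blast
  then obtain b where b: "block_seq b" "FU b \<subseteq> C j" "FU b \<in> q"
    using q unfolding ordered_union_uf_def by blast
  then have "\<forall>a\<in>FU b. num_intervals a mod 3 = j" unfolding C_def by blast
  then show ?thesis using that b block_seq_gap_if_num_intervals_mod_3 by blast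
qed

lemma block_seq_interleave_singletons:
  assumes b: "block_seq b" and gap: "\<And>n. Suc (Max (b n)) < Min (b (Suc n))"
  shows "block_seq (\<lambda>m. if even m then b (m div 2) else {Suc (Max (b (m div 2)))})"
  unfolding block_seq_def
proof (intro conjI allI)
  fix m
  show "(if even m then b (m div 2) else {Suc (Max (b (m div 2)))}) \<in> FinSets"
    using b by (simp add: block_seq_def)
  show "Max (if even m then b (m div 2) else {Suc (Max (b (m div 2)))})
      < Min (if even (Suc m) then b (Suc m div 2) else {Suc (Max (b (Suc m div 2)))})"
  proof (cases "even m")
    case True
    then have "Suc m div 2 = m div 2" by presburger
    then show ?thesis using True by simp
  next
    case False
    then have "Suc m div 2 = Suc (m div 2)" by presburger
    then show ?thesis using False gap[of "m div 2"] by simp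
  qed
qed

lemma infinite_UNIV_minus_range_double: "infinite (UNIV - range (\<lambda>n::nat. 2 * n))"
proof -
  have "range (\<lambda>n. 2 * n + 1) \<subseteq> UNIV - range (\<lambda>n::nat. 2 * n)" by (auto simp: Suc_double_not_eq_double)
  moreover have "infinite (range (\<lambda>n::nat. 2 * n + 1))"
    using finite_imageD[of "\<lambda>n::nat. 2 * n + 1" UNIV] by (auto simp: inj_on_def)
  ultimately show ?thesis using infinite_super by blast
qed

lemma sparse_if_ordered_uniqueness:
  assumes sp: "strongly_productive p" and ou: "ordered_uniqueness x" and Fx: "FP x \<in> p"
  shows "sparse p"
  unfolding sparse_def
proof
  fix A assume "A \<in> p"
  then obtain z where z: "block_seq z" "FP (\<lambda>n. oprod x (z n)) \<subseteq> A" "FP (\<lambda>n. oprod x (z n)) \<in> p"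
    using strongly_productive_block_seq[OF sp ou Fx] by blast
  define y where "y = (\<lambda>n. oprod x (z n))"
  have ouy: "ordered_uniqueness y"
    unfolding y_def by (rule ordered_uniqueness_block_condense[OF ou z(1)])
  obtain b where b: "block_seq b" "\<And>n. Suc (Max (b n)) < Min (b (Suc n))"
    and "FU b \<in> {B. B \<subseteq> FinSets \<and> oprod y ` B \<in> p}"
    using ordered_union_uf_gapped_block_seq[OF ordered_union_uf_image_oprod[OF sp ouy]] z(3)
    unfolding y_def by blast
  then have Fb: "FP (\<lambda>n. oprod y (b n)) \<in> p" by (simp add: FP_block_condense)
  define e where "e m = (if even m then b (m div 2) else {Suc (Max (b (m div 2)))})" for m
  have e: "block_seq e" unfolding e_def using block_seq_interleave_singletons[OF b] .
  define w where "w = (\<lambda>m. oprod y (e m))"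
  have "w \<circ> (\<lambda>n. 2 * n) = (\<lambda>n. oprod y (b n))" by (auto simp: w_def e_def)
  moreover have "FP w \<subseteq> A" using FP_block_condense_subset[OF e, of y] z(2) by (simp add: w_def y_def)
  moreover have "strict_mono (\<lambda>n::nat. 2 * n)" by (simp add: strict_mono_def)
  ultimately show "\<exists>x k. strict_mono k \<and> FP (x \<circ> k) \<in> p \<and> FP x \<subseteq> A \<and> infinite (UNIV - range k)"
    using Fb infinite_UNIV_minus_range_double by metis
qed

theorem mainTheorem16:
  fixes p :: "'a::semigroup_mult set set" and x :: "nat \<Rightarrow> 'a"
  assumes "strongly_productive p"
    and "ordered_uniqueness x"
    and "FP x \<in> p"
  shows "sparse p \<and> mult_iso_OU p"
  using sparse_if_ordered_uniqueness[OF assms] mult_iso_OU_if_ordered_uniqueness[OF assms] by blast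

end
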